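(* Let $S=(N,M_0)$ be a live H1S-WMG$_\le$ system with incidence matrix $I$. For any T-vector $Y\in\mathbb{N}^T$ and marking $M$ with $M_0+I\cdot Y=M$, there exist a marking $M'$ and a firing sequence $\sigma$ with $M_0[\sigma\rangle M'$ such that $\mathbf{P}(\sigma)\ge Y$ and $M[\sigma\ominus Y\rangle M'$. Consequently, the potential reachability graph of $S$ is initially directed (for every $M_1\in PR(S)$ there is a marking reachable both from $M_0$ and from $M_1$), $(N,M)$ is live for every such $M$, and thus $S$ is strongly live (every $M\in PR(S)$ yields a live system $(N,M)$).
   Context: A Petri net is $N=(P,T,W)$ with finite disjoint sets $P$, $T$ and weights $W:(P\times T)\cup(T\times P)\to\mathbb{N}$; incidence matrix $I(p,t)=W(t,p)-W(p,t)$; ${}^\bullet n=\{n':W(n',n)>0\}$, $n^\bullet=\{n':W(n,n')>0\}$. Transition $t$ is enabled at $M$ if $M(p)\ge W(p,t)$ for all $p$; firing yields $M+I[\cdot,t]$; $M[\sigma\rangle M'$ means the sequence $\sigma$ is feasible from $M$ and leads to $M'$. $\mathbf{P}(\sigma)$ is the Parikh vector of $\sigma$. $PR(S)=\{M\in\mathbb{N}^P:\exists Y\in\mathbb{N}^T, M=M_0+I\cdot Y\}$. A system is live if for every transition $t$ and every reachable marking $M'$ some marking reachable from $M'$ enables $t$. A place is shared if it has at least two output transitions. The net is homogeneous if for each place $p$ all weights $W(p,t)$, $t\in p^\bullet$, are equal. An H1S net is a homogeneous net with at most one shared place. It is H1S-WMG$_\le$ if, moreover, deleting the shared place (if any) together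 with its adjacent arcs (keeping all transitions) yields a WMG$_\le$, i.e. a net in which every place has at most one input and at most one output transition. Residue: for a sequence $\sigma$ and $Y\in\mathbb{N}^T$, $\sigma\ominus Y$ is obtained from $\sigma$ by removing, for each transition $t$, the $\min\{\mathbf{P}(\sigma)(t),Y(t)\}$ leftmost occurrences of $t$. *)

theory Defs
  imports Main
begin

text \<open>A Petri net N = (P,T,W): places are the (finite) type 'p, transitions the (finite)
  type 't; the weight function W on (P x T) u (T x P) is split into
  pre p t = W(p,t) and post t p = W(t,p).\<close>

type_synonym 'p marking = "'p \<Rightarrow> nat"

definition incidence :: "('p \<Rightarrow> 't \<Rightarrow> nat) \<Rightarrow> ('t \<Rightarrow> 'p \<Rightarrow> nat) \<Rightarrow> 'p \<Rightarrow> 't \<Rightarrow> int" where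
  "incidence pre post p t = int (post t p) - int (pre p t)"

definition preset_place :: "('t \<Rightarrow> 'p \<Rightarrow> nat) \<Rightarrow> 'p \<Rightarrow> 't set" where
  "preset_place post p = {t. post t p > 0}"

definition postset_place :: "('p \<Rightarrow> 't \<Rightarrow> nat) \<Rightarrow> 'p \<Rightarrow> 't set" where
  "postset_place pre p = {t. pre p t > 0}"

definition enabled :: "('p \<Rightarrow> 't \<Rightarrow> nat) \<Rightarrow> 'p marking \<Rightarrow> 't \<Rightarrow> bool" where
  "enabled pre M t \<longleftrightarrow> (\<forall>p. M p \<ge> pre p t)"

text \<open>marking after firing t (only meaningful when t is enabled)\<close>
definition fire :: "('p \<Rightarrow> 't \<Rightarrow> nat) \<Rightarrow> ('t \<Rightarrow> 'p \<Rightarrow> nat) \<Rightarrow> 'p marking \<Rightarrow> 't \<Rightarrow> 'p marking" where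
  "fire pre post M t = (\<lambda>p. M p - pre p t + post t p)"

text \<open>fires pre post M sigma M' : M[sigma> M'\<close>
fun fires :: "('p \<Rightarrow> 't \<Rightarrow> nat) \<Rightarrow> ('t \<Rightarrow> 'p \<Rightarrow> nat) \<Rightarrow> 'p marking \<Rightarrow> 't list \<Rightarrow> 'p marking \<Rightarrow> bool" where
  "fires pre post M [] M' \<longleftrightarrow> M' = M"
| "fires pre post M (t # \<sigma>) M' \<longleftrightarrow> enabled pre M t \<and> fires pre post (fire pre post M t) \<sigma> M'"

definition reachable :: "('p \<Rightarrow> 't \<Rightarrow> nat) \<Rightarrow> ('t \<Rightarrow> 'p \<Rightarrow> nat) \<Rightarrow> 'p marking \<Rightarrow> 'p marking \<Rightarrow> bool" where
  "reachable pre post M M' \<longleftrightarrow> (\<exists>\<sigma>. fires pre post M \<sigma> M')"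

definition parikh :: "'t list \<Rightarrow> 't \<Rightarrow> nat" where
  "parikh \<sigma> t = count_list \<sigma> t"

fun residue :: "'t list \<Rightarrow> ('t \<Rightarrow> nat) \<Rightarrow> 't list" where
  "residue [] Y = []"
| "residue (t # \<sigma>) Y = (if Y t > 0 then residue \<sigma> (Y(t := Y t - 1)) else t # residue \<sigma> Y)"

definition marking_eq :: "('p \<Rightarrow> 't::finite \<Rightarrow> nat) \<Rightarrow> ('t \<Rightarrow> 'p \<Rightarrow> nat) \<Rightarrow> 'p marking \<Rightarrow> ('t \<Rightarrow> nat) \<Rightarrow> 'p marking \<Rightarrow> bool" where
  "marking_eq pre post M0 Y M \<longleftrightarrow>
     (\<forall>p. int (M p) = int (M0 p) + (\<Sum>t\<in>UNIV. incidence pre post p t * int (Y t)))"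

definition PR :: "('p \<Rightarrow> 't::finite \<Rightarrow> nat) \<Rightarrow> ('t \<Rightarrow> 'p \<Rightarrow> nat) \<Rightarrow> 'p marking \<Rightarrow> 'p marking set" where
  "PR pre post M0 = {M. \<exists>Y::'t \<Rightarrow> nat. marking_eq pre post M0 Y M}"

definition live :: "('p \<Rightarrow> 't \<Rightarrow> nat) \<Rightarrow> ('t \<Rightarrow> 'p \<Rightarrow> nat) \<Rightarrow> 'p marking \<Rightarrow> bool" where
  "live pre post M0 \<longleftrightarrow>
     (\<forall>t M'. reachable pre post M0 M' \<longrightarrow> (\<exists>M''. reachable pre post M' M'' \<and> enabled pre M'' t))"

definition strongly_live :: "('p \<Rightarrow> 't::finite \<Rightarrow> nat) \<Rightarrow> ('t \<Rightarrow> 'p \<Rightarrow> nat) \<Rightarrow> 'p marking \<Rightarrow> bool" where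
  "strongly_live pre post M0 \<longleftrightarrow> (\<forall>M \<in> PR pre post M0. live pre post M)"

definition PR_initially_directed :: "('p \<Rightarrow> 't::finite \<Rightarrow> nat) \<Rightarrow> ('t \<Rightarrow> 'p \<Rightarrow> nat) \<Rightarrow> 'p marking \<Rightarrow> bool" where
  "PR_initially_directed pre post M0 \<longleftrightarrow>
     (\<forall>M1 \<in> PR pre post M0. \<exists>M. reachable pre post M0 M \<and> reachable pre post M1 M)"

definition shared :: "('p \<Rightarrow> 't \<Rightarrow> nat) \<Rightarrow> 'p \<Rightarrow> bool" where
  "shared pre p \<longleftrightarrow> card (postset_place pre p) \<ge> 2"

definition homogeneous :: "('p \<Rightarrow> 't \<Rightarrow> nat) \<Rightarrow> bool" where
  "homogeneous pre \<longleftrightarrow>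
     (\<forall>p t t'. t \<in> postset_place pre p \<longrightarrow> t' \<in> postset_place pre p \<longrightarrow> pre p t = pre p t')"

definition H1S :: "('p::finite \<Rightarrow> 't::finite \<Rightarrow> nat) \<Rightarrow> bool" where
  "H1S pre \<longleftrightarrow> homogeneous pre \<and> card {p. shared pre p} \<le> 1"

text \<open>H1S-WMG<=: additionally, every non-shared place has at most one input and at most
  one output transition (i.e. deleting the shared place, if any, yields a WMG<=).\<close>
definition H1S_WMG_le :: "('p::finite \<Rightarrow> 't::finite \<Rightarrow> nat) \<Rightarrow> ('t \<Rightarrow> 'p \<Rightarrow> nat) \<Rightarrow> bool" where
  "H1S_WMG_le pre post \<longleftrightarrow> H1S pre \<and>
     (\<forall>p. \<not> shared pre p \<longrightarrow> card (preset_place post p) \<le> 1 \<and> card (postset_place pre p) \<le> 1)"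

end

theory Submission
  imports Defs
begin

(* Induction on the size of Y, with M = M0 + I.Y as invariant. If a transition t of the
   support of Y is enabled at M0, fire it from M0 only: Y loses one t, and the residue
   drops exactly this occurrence. Otherwise liveness yields a run from M0 that avoids the
   support of Y and ends by enabling some t in it; its first transition u is then enabled
   at M as well, so firing u from both markings keeps the invariant and shortens the run.
   The reason is that a non-shared place q disabling t at M0 has all its inputs in the
   support of Y (its token count in M0 + I.Y would otherwise be negative), so the run
   cannot refill q; hence only the shared place can disable t, and by homogeneity u does
   not consume from it. Every other input place of u has u as sole output, and u is
   outside the support of Y, so these places hold at least as many tokens at M as at M0.
   Directedness of PR and liveness at every marking of PR follow, since from any marking
   reachable from M one reaches a marking reachable from M0. *)

lemma int_fire:
  assumes "enabled pre M u"
  shows "int (fire pre post M u p) = int (M p) + incidence pre post p u"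
proof -
  have "pre p u \<le> M p" using assms unfolding enabled_def by blast
  then show ?thesis unfolding fire_def incidence_def by (simp add: of_nat_diff)
qed

lemma marking_eq_zero_iff:
  fixes pre :: "'p \<Rightarrow> 't::finite \<Rightarrow> nat"
  shows "marking_eq pre post M0 (\<lambda>_. 0) M \<longleftrightarrow> M = M0"
  unfolding marking_eq_def by (auto simp: fun_eq_iff)

lemma marking_eq_add:
  fixes pre :: "'p \<Rightarrow> 't::finite \<Rightarrow> nat"
  assumes "marking_eq pre post M0 Y M" "marking_eq pre post M Z M'"
  shows "marking_eq pre post M0 (\<lambda>t. Y t + Z t) M'"
  using assms unfolding marking_eq_def by (simp add: distrib_left sum.distrib)

lemma marking_eq_diff:
  fixes pre :: "'p \<Rightarrow> 't::finite \<Rightarrow> nat"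
  assumes "marking_eq pre post M0 Y M" "marking_eq pre post M0 Z M1" "\<And>t. Z t \<le> Y t"
  shows "marking_eq pre post M1 (\<lambda>t. Y t - Z t) M"
  using assms unfolding marking_eq_def
  by (simp add: of_nat_diff right_diff_distrib sum_subtractf)

lemma parikh_Nil: "parikh [] = (\<lambda>_. 0)"
  by (simp add: fun_eq_iff parikh_def)

lemma parikh_Cons: "parikh (u # \<sigma>) t = parikh [u] t + parikh \<sigma> t"
  by (simp add: parikh_def)

lemma marking_eq_fire:
  fixes pre :: "'p \<Rightarrow> 't::finite \<Rightarrow> nat"
  assumes "enabled pre M u"
  shows "marking_eq pre post M (parikh [u]) (fire pre post M u)"
proof -
  have "(\<Sum>t\<in>UNIV. incidence pre post p t * int (parikh [u] t)) = incidence pre post p u" for p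
  proof -
    have "(\<Sum>t\<in>UNIV. incidence pre post p t * int (parikh [u] t))
        = (\<Sum>t\<in>UNIV. if t = u then incidence pre post p u else 0)"
      by (rule sum.cong) (auto simp: parikh_def)
    then show ?thesis by simp
  qed
  then show ?thesis using assms unfolding marking_eq_def by (simp add: int_fire)
qed

lemma marking_eq_fires:
  fixes pre :: "'p \<Rightarrow> 't::finite \<Rightarrow> nat"
  assumes "fires pre post M \<sigma> M'"
  shows "marking_eq pre post M (parikh \<sigma>) M'"
  using assms
proof (induction \<sigma> arbitrary: M)
  case Nil
  then show ?case by (simp add: parikh_Nil marking_eq_zero_iff)
next
  case (Cons u \<sigma>)
  then have "marking_eq pre post M (\<lambda>t. parikh [u] t + parikh \<sigma> t) M'"
    by (auto intro: marking_eq_add marking_eq_fire)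
  then show ?case by (simp only: parikh_Cons[symmetric])
qed

lemma marking_eq_fire_source:
  fixes pre :: "'p \<Rightarrow> 't::finite \<Rightarrow> nat"
  assumes "marking_eq pre post M0 Y M" "enabled pre M0 t" "Y t > 0"
  shows "marking_eq pre post (fire pre post M0 t) (Y(t := Y t - 1)) M"
proof -
  have "marking_eq pre post (fire pre post M0 t) (\<lambda>x. Y x - parikh [t] x) M"
    using assms(3) by (intro marking_eq_diff[OF assms(1) marking_eq_fire[OF assms(2)]])
      (auto simp: parikh_def)
  moreover have "(\<lambda>x. Y x - parikh [t] x) = Y(t := Y t - 1)"
    by (auto simp: fun_eq_iff parikh_def)
  ultimately show ?thesis by simp
qed

lemma marking_eq_fire_both:
  fixes pre :: "'p \<Rightarrow> 't::finite \<Rightarrow> nat"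
  assumes "marking_eq pre post M0 Y M" "enabled pre M0 u" "enabled pre M u"
  shows "marking_eq pre post (fire pre post M0 u) Y (fire pre post M u)"
proof -
  have "marking_eq pre post M0 (\<lambda>t. Y t + parikh [u] t) (fire pre post M u)"
    using assms marking_eq_add marking_eq_fire by blast
  from marking_eq_diff[OF this marking_eq_fire[OF assms(2)]] show ?thesis by simp
qed

lemma PR_fires:
  assumes "M \<in> PR pre post M0" "fires pre post M \<sigma> M'"
  shows "M' \<in> PR pre post M0"
  using assms marking_eq_add marking_eq_fires unfolding PR_def by blast

lemma fires_append:
  "fires pre post M (\<sigma> @ \<tau>) M'' \<longleftrightarrow> (\<exists>M'. fires pre post M \<sigma> M' \<and> fires pre post M' \<tau> M'')"
  by (induction \<sigma> arbitrary: M) auto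

lemma reachable_refl: "reachable pre post M M"
  unfolding reachable_def by (metis fires.simps(1))

lemma reachable_trans:
  "reachable pre post M1 M2 \<Longrightarrow> reachable pre post M2 M3 \<Longrightarrow> reachable pre post M1 M3"
  unfolding reachable_def by (metis fires_append)

lemma reachable_fire:
  "enabled pre M u \<Longrightarrow> reachable pre post M (fire pre post M u)"
  unfolding reachable_def by (metis fires.simps)

lemma live_reachable:
  "live pre post M0 \<Longrightarrow> reachable pre post M0 M \<Longrightarrow> live pre post M"
  unfolding live_def by (meson reachable_trans)

lemma fires_place_unchanged:
  assumes "fires pre post M \<rho> M'" "\<And>x. x \<in> set \<rho> \<Longrightarrow> pre q x = 0 \<and> post x q = 0"
  shows "M' q = M q"
  using assms by (induction \<rho> arbitrary: M) (auto simp: fire_def)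

lemma fires_support_free_prefix:
  fixes Y :: "'t \<Rightarrow> nat"
  assumes "fires pre post M \<rho>0 M1" "enabled pre M1 t" "Y t > 0"
  shows "\<exists>\<rho> M2 t'. fires pre post M \<rho> M2 \<and> (\<forall>x\<in>set \<rho>. Y x = 0)
                   \<and> enabled pre M2 t' \<and> Y t' > 0"
  using assms
proof (induction \<rho>0 arbitrary: M)
  case Nil
  then show ?case by (intro exI[of _ "[]"]) auto
next
  case (Cons u \<rho>0)
  show ?case
  proof (cases "Y u > 0")
    case True
    with Cons.prems show ?thesis by (intro exI[of _ "[]"]) auto
  next
    case False
    from Cons.prems Cons.IH[of "fire pre post M u"] obtain \<rho> M2 t'
      where "fires pre post (fire pre post M u) \<rho> M2" "\<forall>x\<in>set \<rho>. Y x = 0"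
        "enabled pre M2 t'" "Y t' > 0"
      by auto
    with False Cons.prems(1) show ?thesis by (intro exI[of _ "u # \<rho>"]) auto
  qed
qed

lemma unshared_output_unique:
  fixes pre :: "'p \<Rightarrow> 't::finite \<Rightarrow> nat"
  assumes "\<not> shared pre p" "pre p t > 0" "pre p t' > 0"
  shows "t = t'"
  using assms card_le_Suc0_iff_eq[of "postset_place pre p"]
  unfolding shared_def postset_place_def by auto

lemma H1S_WMG_le_unshared_input_unique:
  fixes pre :: "'p::finite \<Rightarrow> 't::finite \<Rightarrow> nat"
  assumes "H1S_WMG_le pre post" "\<not> shared pre p" "post t p > 0" "post t' p > 0"
  shows "t = t'"
  using assms card_le_Suc0_iff_eq[of "preset_place post p"]
  unfolding H1S_WMG_le_def preset_place_def by auto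

lemma H1S_shared_unique:
  fixes pre :: "'p::finite \<Rightarrow> 't::finite \<Rightarrow> nat"
  assumes "H1S pre" "shared pre p" "shared pre q"
  shows "p = q"
  using assms card_le_Suc0_iff_eq[of "{p. shared pre p}"] unfolding H1S_def by auto

lemma H1S_homogeneous:
  assumes "H1S pre" "pre p t > 0" "pre p t' > 0"
  shows "pre p t = pre p t'"
  using assms unfolding H1S_def homogeneous_def postset_place_def by blast

lemma H1S_WMG_le_imp_H1S: "H1S_WMG_le pre post \<Longrightarrow> H1S pre"
  unfolding H1S_WMG_le_def by blast

lemma marking_eq_place_ge:
  fixes pre :: "'p \<Rightarrow> 't::finite \<Rightarrow> nat"
  assumes "marking_eq pre post M0 Y M" "\<And>t. pre p t > 0 \<Longrightarrow> Y t = 0"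
  shows "M0 p \<le> M p"
proof -
  have "0 \<le> incidence pre post p t * int (Y t)" for t
    using assms(2)[of t] unfolding incidence_def by (cases "pre p t = 0") auto
  then have "0 \<le> (\<Sum>t\<in>UNIV. incidence pre post p t * int (Y t))"
    by (simp add: sum_nonneg)
  with assms(1) show ?thesis unfolding marking_eq_def by (metis le_add_same_cancel1 of_nat_le_iff)
qed

lemma H1S_WMG_le_blocking_place_inputs_in_support:
  fixes pre :: "'p::finite \<Rightarrow> 't::finite \<Rightarrow> nat"
  assumes H: "H1S_WMG_le pre post" and me: "marking_eq pre post M0 Y M"
    and q: "\<not> shared pre q" "M0 q < pre q t" and "Y t > 0" "post v q > 0"
  shows "Y v > 0"
proof (rule ccontr)
  assume "\<not> Y v > 0"
  have "int (post x q) * int (Y x) = 0" for x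
  proof (cases "post x q = 0")
    case False
    then have "x = v"
      using H1S_WMG_le_unshared_input_unique[OF H q(1) _ \<open>post v q > 0\<close>] by blast
    with \<open>\<not> Y v > 0\<close> show ?thesis by simp
  qed simp
  then have inflow: "(\<Sum>x\<in>UNIV. int (post x q) * int (Y x)) = 0"
    by (simp only: sum.neutral_const)
  have "int (pre q t) \<le> int (pre q t) * int (Y t)"
    using \<open>Y t > 0\<close> mult_left_mono[of 1 "int (Y t)" "int (pre q t)"] by simp
  also have "\<dots> \<le> (\<Sum>x\<in>UNIV. int (pre q x) * int (Y x))"
    by (rule member_le_sum) auto
  finally have outflow: "int (pre q t) \<le> (\<Sum>x\<in>UNIV. int (pre q x) * int (Y x))" .
  have "int (M q) = int (M0 q) + (\<Sum>x\<in>UNIV. int (post x q) * int (Y x))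
                                 - (\<Sum>x\<in>UNIV. int (pre q x) * int (Y x))"
    using me unfolding marking_eq_def incidence_def by (simp add: left_diff_distrib sum_subtractf)
  with inflow outflow q(2) show False by linarith
qed

lemma H1S_WMG_le_blocking_place_shared:
  fixes pre :: "'p::finite \<Rightarrow> 't::finite \<Rightarrow> nat"
  assumes H: "H1S_WMG_le pre post" and me: "marking_eq pre post M0 Y M" and "Y t > 0"
    and run: "fires pre post M0 \<rho> M1" "\<forall>x\<in>set \<rho>. Y x = 0" "enabled pre M1 t"
    and q: "M0 q < pre q t"
  shows "shared pre q"
proof (rule ccontr)
  assume unshared: "\<not> shared pre q"
  have "pre q x = 0 \<and> post x q = 0" if "x \<in> set \<rho>" for x
  proof
    have "Y x = 0" using that run(2) by blast
    then show "pre q x = 0"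
      using unshared_output_unique[OF unshared, of x t] q \<open>Y t > 0\<close> by fastforce
    show "post x q = 0"
      using \<open>Y x = 0\<close> H1S_WMG_le_blocking_place_inputs_in_support[OF H me unshared q \<open>Y t > 0\<close>]
      by fastforce
  qed
  then have "M1 q = M0 q" by (rule fires_place_unchanged[OF run(1)])
  with run(3) q show False unfolding enabled_def by (metis not_le)
qed

lemma H1S_WMG_le_enabled_outside_support:
  fixes pre :: "'p::finite \<Rightarrow> 't::finite \<Rightarrow> nat"
  assumes H: "H1S_WMG_le pre post" and me: "marking_eq pre post M0 Y M"
    and "Y t > 0" "\<not> enabled pre M0 t"
    and run: "fires pre post M0 \<rho> M1" "\<forall>x\<in>set \<rho>. Y x = 0" "enabled pre M1 t"
    and u: "enabled pre M0 u" "Y u = 0"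
  shows "enabled pre M u"
  unfolding enabled_def
proof
  fix p
  show "pre p u \<le> M p"
  proof (cases "pre p u > 0")
    case False
    then show ?thesis by simp
  next
    case True
    have "\<not> shared pre p"
    proof
      assume "shared pre p"
      from \<open>\<not> enabled pre M0 t\<close> obtain q where q: "M0 q < pre q t"
        unfolding enabled_def by (auto simp: not_le)
      have "shared pre q"
        by (rule H1S_WMG_le_blocking_place_shared[OF H me \<open>Y t > 0\<close> run q])
      then have "q = p"
        using H1S_shared_unique[OF H1S_WMG_le_imp_H1S[OF H] _ \<open>shared pre p\<close>] by blast
      then have "pre p t = pre p u"
        using H1S_homogeneous[OF H1S_WMG_le_imp_H1S[OF H]] True q by simp
      with u(1) q \<open>q = p\<close> show False unfolding enabled_def by (metis not_le)
    qed
    then have "Y x = 0" if "pre p x > 0" for x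
      using unshared_output_unique[OF \<open>\<not> shared pre p\<close> that True] u(2) by blast
    then have "M0 p \<le> M p" by (rule marking_eq_place_ge[OF me])
    with u(1) show ?thesis unfolding enabled_def by (meson order_trans)
  qed
qed

definition joins_by_residue ::
    "('p \<Rightarrow> 't \<Rightarrow> nat) \<Rightarrow> ('t \<Rightarrow> 'p \<Rightarrow> nat) \<Rightarrow> 'p marking \<Rightarrow> ('t \<Rightarrow> nat) \<Rightarrow> 'p marking \<Rightarrow> bool" where
  "joins_by_residue pre post M0 Y M \<longleftrightarrow>
     (\<exists>M' \<sigma>. fires pre post M0 \<sigma> M' \<and> (\<forall>t. Y t \<le> parikh \<sigma> t) \<and> fires pre post M (residue \<sigma> Y) M')"

lemma joins_by_residue_zero:
  assumes "\<And>t. Y t = 0"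
  shows "joins_by_residue pre post M Y M"
  unfolding joins_by_residue_def using assms by (intro exI[of _ M] exI[of _ "[]"]) simp

lemma joins_by_residue_fire_support:
  assumes "enabled pre M0 t" "Y t > 0"
    and "joins_by_residue pre post (fire pre post M0 t) (Y(t := Y t - 1)) M"
  shows "joins_by_residue pre post M0 Y M"
proof -
  from assms(3) obtain M' \<sigma> where \<sigma>: "fires pre post (fire pre post M0 t) \<sigma> M'"
    "\<forall>x. (Y(t := Y t - 1)) x \<le> parikh \<sigma> x" "fires pre post M (residue \<sigma> (Y(t := Y t - 1))) M'"
    unfolding joins_by_residue_def by blast
  have "Y x \<le> parikh (t # \<sigma>) x" for x
    using \<sigma>(2)[rule_format, of x] unfolding parikh_def by (cases "x = t") auto
  with \<sigma> assms(1,2) show ?thesis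
    unfolding joins_by_residue_def by (intro exI[of _ M'] exI[of _ "t # \<sigma>"]) auto
qed

lemma joins_by_residue_fire_outside:
  assumes "enabled pre M0 u" "enabled pre M u" "Y u = 0"
    and "joins_by_residue pre post (fire pre post M0 u) Y (fire pre post M u)"
  shows "joins_by_residue pre post M0 Y M"
proof -
  from assms(4) obtain M' \<sigma> where \<sigma>: "fires pre post (fire pre post M0 u) \<sigma> M'"
    "\<forall>x. Y x \<le> parikh \<sigma> x" "fires pre post (fire pre post M u) (residue \<sigma> Y) M'"
    unfolding joins_by_residue_def by blast
  have "Y x \<le> parikh (u # \<sigma>) x" for x
    using \<sigma>(2)[rule_format, of x] unfolding parikh_def by auto
  with \<sigma> assms(1-3) show ?thesis
    unfolding joins_by_residue_def by (intro exI[of _ M'] exI[of _ "u # \<sigma>"]) auto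
qed

lemma joins_by_residue_common_successor:
  assumes "joins_by_residue pre post M0 Y M"
  shows "\<exists>M'. reachable pre post M0 M' \<and> reachable pre post M M'"
  using assms unfolding joins_by_residue_def reachable_def by blast

lemma H1S_WMG_le_joins_by_residue_along_run:
  fixes pre :: "'p::finite \<Rightarrow> 't::finite \<Rightarrow> nat"
  assumes H: "H1S_WMG_le pre post"
    and smaller: "\<And>Y' M0' M'. sum Y' UNIV < sum Y UNIV \<Longrightarrow> live pre post M0' \<Longrightarrow>
                    marking_eq pre post M0' Y' M' \<Longrightarrow> joins_by_residue pre post M0' Y' M'"
    and "fires pre post M0 \<rho> M1" "\<forall>x\<in>set \<rho>. Y x = 0" "enabled pre M1 t" "Y t > 0"
    and "live pre post M0" "marking_eq pre post M0 Y M"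
  shows "joins_by_residue pre post M0 Y M"
proof -
  have by_support: "joins_by_residue pre post M0 Y M"
    if "live pre post M0" "marking_eq pre post M0 Y M" "enabled pre M0 t" for M0 M
  proof (rule joins_by_residue_fire_support[where Y = Y, OF that(3) \<open>Y t > 0\<close>])
    have "sum (Y(t := Y t - 1)) UNIV < sum Y UNIV"
      using \<open>Y t > 0\<close> by (intro sum_strict_mono_ex1) auto
    then show "joins_by_residue pre post (fire pre post M0 t) (Y(t := Y t - 1)) M"
      by (rule smaller[OF _ live_reachable[OF that(1) reachable_fire[OF that(3)]]
            marking_eq_fire_source[OF that(2,3) \<open>Y t > 0\<close>]])
  qed
  from assms(3,4,7,8) show ?thesis
  proof (induction \<rho> arbitrary: M0 M)
    case Nil
    then have "M1 = M0" by simp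
    with Nil.prems(3,4) \<open>enabled pre M1 t\<close> show ?case by (intro by_support) simp_all
  next
    case (Cons u \<rho>)
    show ?case
    proof (cases "enabled pre M0 t")
      case True
      with Cons.prems(3,4) show ?thesis by (rule by_support)
    next
      case False
      have u: "enabled pre M0 u" "Y u = 0" and run: "fires pre post (fire pre post M0 u) \<rho> M1"
        using Cons.prems(1,2) by auto
      have enM: "enabled pre M u"
        using H1S_WMG_le_enabled_outside_support[OF H Cons.prems(4) \<open>Y t > 0\<close> False
            Cons.prems(1,2) \<open>enabled pre M1 t\<close> u] .
      have "joins_by_residue pre post (fire pre post M0 u) Y (fire pre post M u)"
      proof (rule Cons.IH[OF run])
        show "\<forall>x\<in>set \<rho>. Y x = 0" using Cons.prems(2) by simp
        show "live pre post (fire pre post M0 u)"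
          by (rule live_reachable[OF Cons.prems(3) reachable_fire[OF u(1)]])
        show "marking_eq pre post (fire pre post M0 u) Y (fire pre post M u)"
          by (rule marking_eq_fire_both[OF Cons.prems(4) u(1) enM])
      qed
      then show ?thesis by (rule joins_by_residue_fire_outside[where Y = Y, OF u(1) enM u(2)])
    qed
  qed
qed

lemma H1S_WMG_le_joins_by_residue:
  fixes pre :: "'p::finite \<Rightarrow> 't::finite \<Rightarrow> nat"
  assumes H: "H1S_WMG_le pre post"
  shows "live pre post M0 \<Longrightarrow> marking_eq pre post M0 Y M \<Longrightarrow> joins_by_residue pre post M0 Y M"
proof (induction "sum Y UNIV" arbitrary: Y M0 M rule: less_induct)
  case less
  show ?case
  proof (cases "\<forall>t. Y t = 0")
    case True
    then have "Y = (\<lambda>_. 0)" by auto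
    with less.prems(2) have "M = M0" by (simp add: marking_eq_zero_iff)
    with True show ?thesis by (simp add: joins_by_residue_zero)
  next
    case False
    then obtain t where "Y t > 0" by auto
    from less.prems(1) reachable_refl obtain M1 where "reachable pre post M0 M1" "enabled pre M1 t"
      unfolding live_def by blast
    then obtain \<rho>0 where "fires pre post M0 \<rho>0 M1" unfolding reachable_def by blast
    from fires_support_free_prefix[where Y = Y, OF this \<open>enabled pre M1 t\<close> \<open>Y t > 0\<close>]
    obtain \<rho> M2 t' where run: "fires pre post M0 \<rho> M2" "\<forall>x\<in>set \<rho>. Y x = 0"
        "enabled pre M2 t'" "Y t' > 0"
      by blast
    show ?thesis
      using H1S_WMG_le_joins_by_residue_along_run[OF H less.hyps run less.prems] .
  qed
qed

lemma PR_initially_directed_if_joins_by_residue: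
  assumes "\<And>Y M. marking_eq pre post M0 Y M \<Longrightarrow> joins_by_residue pre post M0 Y M"
  shows "PR_initially_directed pre post M0"
  unfolding PR_initially_directed_def PR_def
  using assms joins_by_residue_common_successor by blast

lemma live_if_PR_initially_directed:
  assumes live: "live pre post M0" and directed: "PR_initially_directed pre post M0"
    and "M \<in> PR pre post M0"
  shows "live pre post M"
  unfolding live_def
proof (intro allI impI)
  fix t M1
  assume "reachable pre post M M1"
  with \<open>M \<in> PR pre post M0\<close> have "M1 \<in> PR pre post M0"
    unfolding reachable_def using PR_fires by blast
  with directed obtain M2 where "reachable pre post M0 M2" "reachable pre post M1 M2"
    unfolding PR_initially_directed_def by blast
  moreover from live \<open>reachable pre post M0 M2\<close> obtain M3
    where "reachable pre post M2 M3" "enabled pre M3 t"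
    unfolding live_def by blast
  ultimately show "\<exists>M'. reachable pre post M1 M' \<and> enabled pre M' t"
    using reachable_trans by blast
qed

theorem mainTheorem5:
  fixes pre :: "'p::finite \<Rightarrow> 't::finite \<Rightarrow> nat"
    and post :: "'t \<Rightarrow> 'p \<Rightarrow> nat"
    and M0 :: "'p \<Rightarrow> nat"
  assumes "H1S_WMG_le pre post"
    and "live pre post M0"
  shows "(\<forall>Y M. marking_eq pre post M0 Y M \<longrightarrow>
            (\<exists>M' \<sigma>. fires pre post M0 \<sigma> M' \<and> (\<forall>t. Y t \<le> parikh \<sigma> t)
                    \<and> fires pre post M (residue \<sigma> Y) M'))
       \<and> PR_initially_directed pre post M0
       \<and> (\<forall>Y M. marking_eq pre post M0 Y M \<longrightarrow> live pre post M)
       \<and> strongly_live pre post M0"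
proof -
  have joins: "joins_by_residue pre post M0 Y M" if "marking_eq pre post M0 Y M" for Y M
    using H1S_WMG_le_joins_by_residue[OF assms that] .
  then have directed: "PR_initially_directed pre post M0"
    by (rule PR_initially_directed_if_joins_by_residue)
  have live_PR: "live pre post M" if "M \<in> PR pre post M0" for M
    using live_if_PR_initially_directed[OF assms(2) directed that] .
  show ?thesis
    using joins directed live_PR
    unfolding joins_by_residue_def strongly_live_def PR_def by blast
qed

end
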